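(* Let $0<\alpha<\beta<1$ and $t\geq1$. Let $\mathcal{P}_t'$ be the set of real polynomials $f$ of degree at most $t$ with $f(0)=0$ and $f(1)=1$. Suppose $f^\star\in\mathcal{P}_t'$ is a minimizer of \[ \frac{\max_{\lambda\in[0,\alpha]}|f(\lambda)|}{\min_{\lambda\in[\beta,1]}|f(\lambda)|} \] over $f\in\mathcal{P}_t'$. Then $f^\star$ has no roots in the interval $[\alpha,1]$.
   Context: The objective is taken to be $+\infty$ when the denominator vanishes. *)

theory Defs
  imports "HOL-Analysis.Analysis" "HOL-Computational_Algebra.Polynomial" "HOL-Library.Extended_Real"
begin

definition Pt' :: "nat \<Rightarrow> real poly set" where
  "Pt' t = {f. degree f \<le> t \<and> poly f 0 = 0 \<and> poly f 1 = 1}"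

text \<open>Max/min over compact intervals of a continuous function are
  expressed as Sup/Inf (they are attained).\<close>
definition ratio_obj :: "real \<Rightarrow> real \<Rightarrow> real poly \<Rightarrow> ereal" where
  "ratio_obj a b f =
     (let num = Sup ((\<lambda>x. \<bar>poly f x\<bar>) ` {0..a});
          den = Inf ((\<lambda>x. \<bar>poly f x\<bar>) ` {b..1})
      in if den = 0 then \<infinity> else ereal (num / den))"

end

theory Submission
  imports Defs
begin

text \<open>If the minimiser had a root \<open>r\<close> in \<open>[\<alpha>, 1]\<close>, then \<open>r < \<beta>\<close> (the denominator is positive and
  \<open>f(1) = 1\<close>). Write \<open>f = (x - r) h\<close> and move the root slightly to the left, to \<open>r - \<epsilon>\<close>.
  On \<open>[\<beta>, 1]\<close> the factor \<open>|x - r|\<close> grows to \<open>|x - r| + \<epsilon> \<ge> (1 + \<epsilon>) |x - r|\<close>, while on \<open>[0, \<alpha>]\<close> the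
  new factor is at most \<open>max |x - r| \<epsilon>\<close>, which does not raise the maximum there once \<open>\<epsilon>\<close> is small.
  After renormalising at \<open>1\<close> the ratio has dropped by a factor \<open>1 + \<epsilon>\<close>, a contradiction.\<close>

lemma bdd_above_abs_poly_image: "bdd_above ((\<lambda>x. \<bar>poly p x\<bar>) ` {a..b::real})"
proof -
  have "compact ((\<lambda>x. \<bar>poly p x\<bar>) ` {a..b::real})"
    by (intro compact_continuous_image continuous_intros) simp
  then show ?thesis by (intro bounded_imp_bdd_above compact_imp_bounded)
qed

lemma abs_poly_le_Sup: "x \<in> {a..b} \<Longrightarrow> \<bar>poly p x\<bar> \<le> Sup ((\<lambda>x. \<bar>poly p x\<bar>) ` {a..b::real})"
  by (rule cSup_upper) (auto intro: bdd_above_abs_poly_image)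

lemma Sup_abs_poly_le:
  "a \<le> b \<Longrightarrow> (\<And>x. x \<in> {a..b} \<Longrightarrow> \<bar>poly p x\<bar> \<le> B) \<Longrightarrow> Sup ((\<lambda>x. \<bar>poly p x\<bar>) ` {a..b::real}) \<le> B"
  by (rule cSup_least) auto

lemma Sup_abs_poly_pos:
  assumes "p \<noteq> 0" "a < b"
  shows "0 < Sup ((\<lambda>x. \<bar>poly p x\<bar>) ` {a..b::real})"
proof -
  have "\<not> {a..b} \<subseteq> {x. poly p x = 0}"
    using poly_roots_finite[OF assms(1)] assms(2) by (meson finite_subset infinite_Icc)
  then obtain x where "x \<in> {a..b}" "poly p x \<noteq> 0" by blast
  then show ?thesis using abs_poly_le_Sup[of x a b p] by linarith
qed

lemma Inf_abs_poly_le: "x \<in> {a..b} \<Longrightarrow> Inf ((\<lambda>x. \<bar>poly p x\<bar>) ` {a..b::real}) \<le> \<bar>poly p x\<bar>"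
  by (rule cInf_lower) (auto intro: bdd_belowI[of _ 0])

lemma le_Inf_abs_poly:
  "a \<le> b \<Longrightarrow> (\<And>x. x \<in> {a..b} \<Longrightarrow> B \<le> \<bar>poly p x\<bar>) \<Longrightarrow> B \<le> Inf ((\<lambda>x. \<bar>poly p x\<bar>) ` {a..b::real})"
  by (rule cInf_greatest) auto

lemma ratio_obj_eq_ereal:
  "Inf ((\<lambda>x. \<bar>poly f x\<bar>) ` {b..1}) \<noteq> 0 \<Longrightarrow>
   ratio_obj a b f = ereal (Sup ((\<lambda>x. \<bar>poly f x\<bar>) ` {0..a}) / Inf ((\<lambda>x. \<bar>poly f x\<bar>) ` {b..1}))"
  unfolding ratio_obj_def Let_def by simp

lemma ratio_obj_eq_infinity: "Inf ((\<lambda>x. \<bar>poly f x\<bar>) ` {b..1}) = 0 \<Longrightarrow> ratio_obj a b f = \<infinity>"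
  unfolding ratio_obj_def Let_def by simp

lemma ratio_obj_le_ereal:
  assumes "0 \<le> a" "b \<le> 1" "0 < D"
    and "\<And>x. x \<in> {0..a} \<Longrightarrow> \<bar>poly p x\<bar> \<le> N"
    and "\<And>x. x \<in> {b..1} \<Longrightarrow> D \<le> \<bar>poly p x\<bar>"
  shows "ratio_obj a b p \<le> ereal (N / D)"
proof -
  define num where "num = Sup ((\<lambda>x. \<bar>poly p x\<bar>) ` {0..a})"
  define den where "den = Inf ((\<lambda>x. \<bar>poly p x\<bar>) ` {b..1})"
  have "num \<le> N" unfolding num_def using assms by (intro Sup_abs_poly_le)
  moreover have "0 \<le> num" unfolding num_def using abs_poly_le_Sup[of 0 0 a p] assms(1) by auto
  moreover have "D \<le> den" unfolding den_def using assms by (intro le_Inf_abs_poly)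
  ultimately have "num / den \<le> N / D"
    using assms(3) by (meson frac_le order_trans)
  moreover have "ratio_obj a b p = ereal (num / den)"
    unfolding num_def den_def using \<open>D \<le> den\<close> assms(3) den_def by (intro ratio_obj_eq_ereal) auto
  ultimately show ?thesis by simp
qed

lemma ratio_obj_identity_finite:
  assumes "0 < b" "b \<le> 1"
  shows "ratio_obj a b [:0, 1:] \<noteq> \<infinity>"
proof -
  have "b \<le> Inf ((\<lambda>x. \<bar>poly [:0, 1:] x\<bar>) ` {b..1})"
    using assms by (intro le_Inf_abs_poly) auto
  then show ?thesis using assms by (subst ratio_obj_eq_ereal) auto
qed

lemma poly_linear_factor_mult:
  fixes x y :: "'a :: comm_ring_1"
  shows "poly ([:-y, 1:] * h) x = (x - y) * poly h x"
  by (simp add: algebra_simps)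

lemma abs_poly_shift_root_le:
  fixes x r e :: real
  assumes "x \<le> r" "0 \<le> e"
  shows "\<bar>poly ([:-(r - e), 1:] * h) x\<bar> \<le> max \<bar>poly ([:-r, 1:] * h) x\<bar> (e * \<bar>poly h x\<bar>)"
proof -
  have "\<bar>x - (r - e)\<bar> \<le> max \<bar>x - r\<bar> e" using assms by auto
  then have "\<bar>x - (r - e)\<bar> * \<bar>poly h x\<bar> \<le> max \<bar>x - r\<bar> e * \<bar>poly h x\<bar>"
    by (rule mult_right_mono) simp
  then show ?thesis unfolding poly_linear_factor_mult abs_mult by (simp add: max_mult_distrib_right)
qed

lemma abs_poly_shift_root_ge:
  fixes x r e :: real
  assumes "r \<le> x" "x \<le> r + 1" "0 \<le> e"
  shows "(1 + e) * \<bar>poly ([:-r, 1:] * h) x\<bar> \<le> \<bar>poly ([:-(r - e), 1:] * h) x\<bar>"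
proof -
  have "e * (x - r) \<le> e" using assms by (simp add: mult_left_le)
  then have "(1 + e) * \<bar>x - r\<bar> \<le> \<bar>x - (r - e)\<bar>" using assms by (simp add: algebra_simps)
  then have "(1 + e) * \<bar>x - r\<bar> * \<bar>poly h x\<bar> \<le> \<bar>x - (r - e)\<bar> * \<bar>poly h x\<bar>"
    by (rule mult_right_mono) simp
  then show ?thesis unfolding poly_linear_factor_mult abs_mult by simp
qed

lemma smult_inverse_poly_one_in_Pt':
  assumes "degree p \<le> t" "poly p 0 = 0" "poly p 1 \<noteq> 0"
  shows "smult (1 / poly p 1) p \<in> Pt' t"
  using assms by (simp add: Pt'_def)

lemma ratio_obj_shift_root_left:
  assumes "0 < a" "a \<le> r" "r < b" "b \<le> 1"
    and f: "f \<in> Pt' t" "poly f r = 0"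
    and den_pos: "0 < Inf ((\<lambda>x. \<bar>poly f x\<bar>) ` {b..1})"
  obtains g where "g \<in> Pt' t" "ratio_obj a b g < ratio_obj a b f"
proof -
  have f0: "poly f 0 = 0" and f1: "poly f 1 = 1" and "degree f \<le> t"
    using f(1) by (auto simp: Pt'_def)
  obtain h where fh: "f = [:-r, 1:] * h"
    using f(2) by (metis dvdE poly_eq_0_iff_dvd)
  have "h \<noteq> 0" using f1 fh by auto
  define N where "N = Sup ((\<lambda>x. \<bar>poly f x\<bar>) ` {0..a})"
  define D where "D = Inf ((\<lambda>x. \<bar>poly f x\<bar>) ` {b..1})"
  define M where "M = Sup ((\<lambda>x. \<bar>poly h x\<bar>) ` {0..a})"
  have "0 < D" using den_pos by (simp add: D_def)
  have "0 < N" unfolding N_def using f1 assms(1) by (intro Sup_abs_poly_pos) auto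
  have "0 \<le> M" unfolding M_def using abs_poly_le_Sup[of 0 0 a h] assms(1) by auto
  define e where "e = N / (M + 1)"
  have "0 < e" using \<open>0 < N\<close> \<open>0 \<le> M\<close> by (simp add: e_def)
  have "e * M \<le> N" using \<open>0 < e\<close> \<open>0 \<le> M\<close> by (simp add: e_def field_simps)
  define p where "p = [:-(r - e), 1:] * h"
  define c where "c = 1 / poly p 1"
  have "poly h 1 \<noteq> 0" using f1 unfolding fh poly_linear_factor_mult by auto
  then have "poly p 1 \<noteq> 0"
    using \<open>r < b\<close> \<open>b \<le> 1\<close> \<open>0 < e\<close> unfolding p_def poly_linear_factor_mult by simp
  have "poly h 0 = 0" using f0 assms(1,2) unfolding fh poly_linear_factor_mult by simp
  then have "poly p 0 = 0" unfolding p_def poly_linear_factor_mult by simp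
  moreover have "degree p = degree f"
    using \<open>h \<noteq> 0\<close> by (simp add: p_def fh degree_mult_eq del: mult_pCons_left)
  ultimately have "smult c p \<in> Pt' t"
    unfolding c_def using \<open>degree f \<le> t\<close> \<open>poly p 1 \<noteq> 0\<close> by (intro smult_inverse_poly_one_in_Pt') auto
  have left: "\<bar>poly (smult c p) x\<bar> \<le> \<bar>c\<bar> * N" if x: "x \<in> {0..a}" for x
  proof -
    have "\<bar>poly p x\<bar> \<le> max \<bar>poly f x\<bar> (e * \<bar>poly h x\<bar>)"
      unfolding p_def fh using x \<open>a \<le> r\<close> \<open>0 < e\<close> by (intro abs_poly_shift_root_le) auto
    also have "\<dots> \<le> max N (e * M)"
      using x \<open>0 < e\<close> unfolding N_def M_def by (intro max.mono abs_poly_le_Sup mult_left_mono) auto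
    also have "\<dots> = N" using \<open>e * M \<le> N\<close> by simp
    finally show ?thesis by (simp add: abs_mult mult_left_mono)
  qed
  have right: "\<bar>c\<bar> * ((1 + e) * D) \<le> \<bar>poly (smult c p) x\<bar>" if x: "x \<in> {b..1}" for x
  proof -
    have "(1 + e) * D \<le> (1 + e) * \<bar>poly f x\<bar>"
      unfolding D_def using x \<open>0 < e\<close> by (intro mult_left_mono Inf_abs_poly_le) auto
    also have "\<dots> \<le> \<bar>poly p x\<bar>"
      unfolding p_def fh using x \<open>r < b\<close> \<open>0 < a\<close> \<open>a \<le> r\<close> \<open>0 < e\<close>
      by (intro abs_poly_shift_root_ge) auto
    finally show ?thesis by (simp add: abs_mult mult_left_mono)
  qed
  have "ratio_obj a b (smult c p) \<le> ereal (\<bar>c\<bar> * N / (\<bar>c\<bar> * ((1 + e) * D)))"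
    using \<open>poly p 1 \<noteq> 0\<close> \<open>0 < e\<close> \<open>0 < D\<close> \<open>0 < a\<close> \<open>b \<le> 1\<close>
    by (intro ratio_obj_le_ereal[OF _ _ _ left right]) (auto simp: c_def)
  also have "\<dots> = ereal (N / ((1 + e) * D))" using \<open>poly p 1 \<noteq> 0\<close> by (simp add: c_def)
  also have "\<dots> < ereal (N / D)"
  proof -
    have "N / ((1 + e) * D) < N / D"
      using \<open>0 < e\<close> \<open>0 < N\<close> \<open>0 < D\<close> by (intro divide_strict_left_mono) simp_all
    then show ?thesis by simp
  qed
  also have "\<dots> = ratio_obj a b f"
    unfolding N_def D_def using den_pos by (intro ratio_obj_eq_ereal[symmetric]) simp
  finally show ?thesis using \<open>smult c p \<in> Pt' t\<close> that by blast
qed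

theorem lemma2:
  fixes \<alpha> \<beta> :: real and t :: nat and fstar :: "real poly"
  assumes "0 < \<alpha>" "\<alpha> < \<beta>" "\<beta> < 1" "t \<ge> 1"
    and "fstar \<in> Pt' t"
    and "\<forall>g \<in> Pt' t. ratio_obj \<alpha> \<beta> fstar \<le> ratio_obj \<alpha> \<beta> g"
  shows "\<forall>x \<in> {\<alpha>..1}. poly fstar x \<noteq> 0"
proof (rule ccontr)
  assume "\<not> ?thesis"
  then obtain r where r: "\<alpha> \<le> r" "r \<le> 1" "poly fstar r = 0" by auto
  define D where "D = Inf ((\<lambda>x. \<bar>poly fstar x\<bar>) ` {\<beta>..1})"
  have "[:0, 1:] \<in> Pt' t" using \<open>t \<ge> 1\<close> by (simp add: Pt'_def)
  then have "ratio_obj \<alpha> \<beta> fstar \<le> ratio_obj \<alpha> \<beta> [:0, 1:]" using assms(6) by blast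
  then have "ratio_obj \<alpha> \<beta> fstar \<noteq> \<infinity>"
    using ratio_obj_identity_finite[of \<beta> \<alpha>] assms(1-3) by auto
  then have "D \<noteq> 0" unfolding D_def using ratio_obj_eq_infinity by blast
  moreover have "0 \<le> D" unfolding D_def using assms(3) by (intro le_Inf_abs_poly) auto
  ultimately have "0 < D" by simp
  have "r < \<beta>"
  proof (rule ccontr)
    assume "\<not> r < \<beta>"
    then have "D \<le> \<bar>poly fstar r\<bar>" unfolding D_def using r by (intro Inf_abs_poly_le) auto
    then show False using r(3) \<open>0 < D\<close> by simp
  qed
  obtain g where "g \<in> Pt' t" "ratio_obj \<alpha> \<beta> g < ratio_obj \<alpha> \<beta> fstar"
    using ratio_obj_shift_root_left[of \<alpha> r \<beta> fstar t] assms(1,3,5) r \<open>r < \<beta>\<close> \<open>0 < D\<close>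
    unfolding D_def by auto
  then show False using assms(6) by (meson leD)
qed

end
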